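(* Let $a,b,k$ be positive integers. Define $a_1=a$, $a_2=b$, and $a_n=ka_{n-1}+a_{n-2}$ for $n\ge 3$. Let $(x_n)_{n\ge1}$ be the sequence $1,1,1,2,2,2,1,1,1,2,2,2,\ldots$ and $(y_n)_{n\ge1}$ the sequence $2,2,2,1,1,1,2,2,2,1,1,1,\ldots$ (blocks of three, alternating). (1) If $k$ is even, then the sequence $(\Gamma(a_n,a_{n+1}))_{n\ge1}$ is constant. (2) If $k$ is odd: (a) if $a$ and $b$ are both odd, then $(\Gamma(a_n,a_{n+1}))_{n\ge 3}$ equals $(x_n)_{n\ge1}$ or $(y_n)_{n\ge1}$; (b) if $a$ is odd and $b$ is even, then $(\Gamma(a_n,a_{n+1}))_{n\ge 2}$ equals $(x_n)_{n\ge1}$ or $(y_n)_{n\ge1}$; (c) if $a$ is even and $b$ is odd, then $(\Gamma(a_n,a_{n+1}))_{n\ge 1}$ equals $(x_n)_{n\ge1}$ or $(y_n)_{n\ge1}$.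
   Context: For relatively prime positive integers $p,q$, exactly one of the equations $px+qy=\frac{(p-1)(q-1)}{2}$ (Equation 1) and $px+qy+1=\frac{(p-1)(q-1)}{2}$ (Equation 2) has a solution in nonnegative integers $(x,y)$. For positive integers $a,b$ with $d=\gcd(a,b)$, $\Gamma(a,b)=1$ if Equation 1 with $(p,q)=(a/d,b/d)$ has a nonnegative integer solution, and $\Gamma(a,b)=2$ otherwise. A sequence indexed from $n\ge m$ "equals" $(x_n)_{n\ge1}$ means its $j$-th term (the one with index $n=m+j-1$) equals $x_j$ for all $j\ge1$. *)

theory Defs
  imports Main
begin

text \<open>Equation 1 for coprime p q: p x + q y = (p-1)(q-1)/2 with x, y nonnegative integers.
  We write it multiplied by 2 to avoid division (the right side is an integer for coprime p q).\<close>
definition eq1_solvable :: "nat \<Rightarrow> nat \<Rightarrow> bool" where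
  "eq1_solvable p q \<longleftrightarrow>
     (\<exists>x y :: nat. 2 * (int p * int x + int q * int y) = (int p - 1) * (int q - 1))"

definition Gamma :: "nat \<Rightarrow> nat \<Rightarrow> nat" where
  "Gamma a b = (let d = gcd a b in if eq1_solvable (a div d) (b div d) then 1 else 2)"

text \<open>The sequence a_1 = a, a_2 = b, a_n = k a_{n-1} + a_{n-2} (n >= 3), indexed literally
  from 1; the value at index 0 is an irrelevant dummy.\<close>
fun recseq :: "nat \<Rightarrow> nat \<Rightarrow> nat \<Rightarrow> nat \<Rightarrow> nat" where
  "recseq a b k 0 = 0"
| "recseq a b k (Suc 0) = a"
| "recseq a b k (Suc (Suc 0)) = b"
| "recseq a b k (Suc (Suc (Suc n))) = k * recseq a b k (Suc (Suc n)) + recseq a b k (Suc n)"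

definition xseq :: "nat \<Rightarrow> nat" where
  "xseq j = (if (j - 1) mod 6 < 3 then 1 else 2)"

definition yseq :: "nat \<Rightarrow> nat" where
  "yseq j = (if (j - 1) mod 6 < 3 then 2 else 1)"

end

theory Submission
  imports Defs
begin

text \<open>With u = 2y + 1 and v = 2x + 1, Equation 1 asks for a positive solution (u, v) of
  q u + p v = p q + 1 with u and v both odd. For coprime p, q this equation has exactly one positive
  solution, and (u, v) \<mapsto> (u, v - u + p) carries it to the one for (p, q + p). If p is odd this
  map preserves "u and v both odd"; if p is even, u is forced to be odd (p q + 1 is odd) and the
  parity of v flips. Hence \<Gamma>(a, b + a) = \<Gamma>(a, b) when a / gcd(a, b) is odd, and \<Gamma> switches to
  the other value when it is even.

  Consecutive terms satisfy gcd(a_n, a_{n+1}) = gcd(a, b) and a_{n+2} = k a_{n+1} + a_n, so going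
  from \<Gamma>(a_n, a_{n+1}) to \<Gamma>(a_{n+1}, a_{n+2}) switches the value exactly when k is odd and
  a_{n+1} / gcd(a, b) is even. For odd k, as soon as two
  consecutive terms are odd the parities repeat odd, odd, even, and gcd(a, b) is odd, so \<Gamma> switches
  at every third step.\<close>

definition positive_solution :: "int \<Rightarrow> int \<Rightarrow> int \<Rightarrow> int \<Rightarrow> bool" where
  "positive_solution p q u v \<longleftrightarrow> 0 < u \<and> 0 < v \<and> q * u + p * v = p * q + 1"

lemma positive_solution_le:
  assumes "0 < p" "0 < q" "positive_solution p q u v"
  shows "u \<le> p"
proof -
  have "p * 1 \<le> p * v"
    using assms by (intro mult_left_mono) (auto simp: positive_solution_def)
  then have "q * u \<le> q * p"
    using assms mult.commute[of p q] unfolding positive_solution_def by linarith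
  then show ?thesis using \<open>0 < q\<close> by simp
qed

lemma positive_solution_add:
  assumes "0 < p" "0 < q" "positive_solution p q u v"
  shows "positive_solution p (q + p) u (v - u + p)"
  using positive_solution_le[OF assms] assms unfolding positive_solution_def
  by (auto simp: algebra_simps)

lemma positive_solution_unique:
  assumes "coprime p q" "0 < p" "0 < q"
    and "positive_solution p q u v" "positive_solution p q u' v'"
  shows "u = u' \<and> v = v'"
proof -
  have "q * (u - u') = p * (v' - v)"
    using assms(4,5) unfolding positive_solution_def by (simp add: algebra_simps)
  then have "p dvd q * (u - u')"
    by simp
  then have "p dvd u - u'"
    using \<open>coprime p q\<close> by (simp add: coprime_dvd_mult_right_iff)
  moreover have "\<bar>u - u'\<bar> < p"
    using positive_solution_le[OF \<open>0 < p\<close> \<open>0 < q\<close> assms(4)]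
      positive_solution_le[OF \<open>0 < p\<close> \<open>0 < q\<close> assms(5)] assms(4,5)
    unfolding positive_solution_def by linarith
  ultimately have "u = u'"
    using dvd_imp_le_int[of "u - u'" p] by fastforce
  moreover from this have "p * v = p * v'"
    using assms(4,5) unfolding positive_solution_def \<open>u = u'\<close> by linarith
  ultimately show ?thesis
    using \<open>0 < p\<close> by simp
qed

lemma positive_solution_exists:
  assumes "coprime p q" "0 < p" "0 < q"
  obtains u v where "positive_solution p q u v"
proof -
  obtain s t where st: "s * q + t * p = 1"
    using bezout_int[of q p] \<open>coprime p q\<close> by (auto simp: coprime_iff_gcd_eq_1 gcd.commute)
  define c where "c = (s - 1) div p"
  \<comment> \<open>not \<open>s mod p\<close>, which vanishes for p = 1\<close>
  define u where "u = (s - 1) mod p + 1"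
  define v where "v = q + t + q * c"
  have u: "u = s - p * c"
    unfolding u_def c_def using div_mult_mod_eq[of "s - 1" p] by (simp add: algebra_simps)
  have eq: "q * u + p * v = p * q + 1"
    using st unfolding u v_def by (simp add: algebra_simps)
  have "0 < u" "u \<le> p"
    using \<open>0 < p\<close> unfolding u_def by (simp_all add: add1_zle_eq)
  then have "q * u \<le> p * q"
    using \<open>0 < q\<close> by (simp add: mult.commute mult_left_mono)
  then have "0 < p * v"
    using eq by linarith
  then have "0 < v"
    using \<open>0 < p\<close> by (simp add: zero_less_mult_iff)
  show ?thesis
    using that \<open>0 < u\<close> \<open>0 < v\<close> eq unfolding positive_solution_def by blast
qed

lemma eq1_solvable_iff:
  "eq1_solvable p q \<longleftrightarrow> (\<exists>u v. positive_solution (int p) (int q) u v \<and> odd u \<and> odd v)"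
proof
  assume "eq1_solvable p q"
  then obtain x y :: nat
    where "2 * (int p * int x + int q * int y) = (int p - 1) * (int q - 1)"
    unfolding eq1_solvable_def by blast
  then have "positive_solution (int p) (int q) (2 * int y + 1) (2 * int x + 1)"
    unfolding positive_solution_def by (simp add: algebra_simps)
  moreover have "odd (2 * int y + 1)" "odd (2 * int x + 1)"
    by simp_all
  ultimately show "\<exists>u v. positive_solution (int p) (int q) u v \<and> odd u \<and> odd v"
    by blast
next
  assume "\<exists>u v. positive_solution (int p) (int q) u v \<and> odd u \<and> odd v"
  then obtain u v where sol: "positive_solution (int p) (int q) u v" and "odd u" "odd v"
    by blast
  then obtain x y where "u = 2 * y + 1" "v = 2 * x + 1"
    by (meson oddE)
  with sol have "2 * (int p * int (nat x) + int q * int (nat y)) = (int p - 1) * (int q - 1)"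
    unfolding positive_solution_def by (simp add: algebra_simps)
  then show "eq1_solvable p q"
    unfolding eq1_solvable_def by blast
qed

lemma eq1_solvable_commute: "eq1_solvable p q = eq1_solvable q p"
proof -
  have "eq1_solvable q p" if "eq1_solvable p q" for p q
  proof -
    from that obtain x y :: nat
      where "2 * (int p * int x + int q * int y) = (int p - 1) * (int q - 1)"
      unfolding eq1_solvable_def by blast
    then have "2 * (int q * int y + int p * int x) = (int q - 1) * (int p - 1)"
      by (simp add: algebra_simps)
    then show ?thesis
      unfolding eq1_solvable_def by blast
  qed
  then show ?thesis by blast
qed

lemma eq1_solvable_iff_positive_solution:
  assumes "coprime p q" "0 < p" "0 < q" "positive_solution (int p) (int q) u v"
  shows "eq1_solvable p q \<longleftrightarrow> odd u \<and> odd v"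
proof
  assume "eq1_solvable p q"
  then obtain u' v' where sol': "positive_solution (int p) (int q) u' v'" and "odd u'" "odd v'"
    unfolding eq1_solvable_iff by blast
  moreover have "u = u' \<and> v = v'"
    using positive_solution_unique[OF _ _ _ assms(4) sol'] assms(1-3) by simp
  ultimately show "odd u \<and> odd v"
    by simp
next
  assume "odd u \<and> odd v"
  with assms(4) show "eq1_solvable p q"
    unfolding eq1_solvable_iff by blast
qed

lemma eq1_solvable_add:
  assumes "coprime p q" "0 < p" "0 < q"
  shows "eq1_solvable p (q + p) \<longleftrightarrow> (if odd p then eq1_solvable p q else \<not> eq1_solvable p q)"
proof -
  obtain u v where sol: "positive_solution (int p) (int q) u v"
    using positive_solution_exists[of "int p" "int q"] assms by auto
  have "positive_solution (int p) (int (q + p)) u (v - u + int p)"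
    using positive_solution_add[OF _ _ sol] assms by simp
  then have "eq1_solvable p (q + p) \<longleftrightarrow> odd u \<and> odd (v - u + int p)"
    using assms by (intro eq1_solvable_iff_positive_solution)
      (auto simp: coprime_iff_gcd_eq_1 add.commute[of q p])
  moreover have "eq1_solvable p q \<longleftrightarrow> odd u \<and> odd v"
    using assms sol by (intro eq1_solvable_iff_positive_solution)
  moreover have "odd u" if "even p"
  proof -
    have "odd (int q * u + int p * v)"
      using sol \<open>even p\<close> unfolding positive_solution_def by simp
    with \<open>even p\<close> show ?thesis by simp
  qed
  ultimately show ?thesis
    by (cases "odd p") auto
qed

lemma Gamma_commute: "Gamma a b = Gamma b a"
  unfolding Gamma_def by (simp add: gcd.commute eq1_solvable_commute)

lemma Gamma_cases: "Gamma a b = 1 \<or> Gamma a b = 2"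
  unfolding Gamma_def Let_def by simp

lemma Gamma_add:
  assumes "0 < a" "0 < b"
  shows "Gamma a (b + a) = (if odd (a div gcd a b) then Gamma a b else 3 - Gamma a b)"
proof -
  define d where "d = gcd a b"
  define p where "p = a div d"
  define q where "q = b div d"
  have "d dvd a" "d dvd b" "0 < d"
    using assms unfolding d_def by auto
  then have "0 < p" "0 < q" "(b + a) div d = q + p"
    using assms unfolding p_def q_def by (auto simp: dvd_div_eq_0_iff)
  moreover have "coprime p q"
    using assms unfolding p_def q_def d_def by (simp add: div_gcd_coprime)
  moreover have "gcd a (b + a) = d"
    unfolding d_def using gcd_add2[of a b] by (simp add: add.commute)
  ultimately show ?thesis
    using eq1_solvable_add[of p q] unfolding Gamma_def Let_def p_def q_def d_def by auto
qed

lemma Gamma_add_mult: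
  assumes "0 < a" "0 < b"
  shows "Gamma a (b + m * a) =
    (if odd (a div gcd a b) \<or> even m then Gamma a b else 3 - Gamma a b)"
proof (induction m)
  case (Suc m)
  have "gcd a (b + m * a) = gcd a b"
    using gcd_add_mult[of a m b] by (simp add: add.commute)
  then have "Gamma a (b + m * a + a) =
      (if odd (a div gcd a b) then Gamma a (b + m * a) else 3 - Gamma a (b + m * a))"
    using Gamma_add[of a "b + m * a"] assms by simp
  then show ?case
    using Suc.IH Gamma_cases[of a b] by (auto simp: algebra_simps)
qed simp

lemma recseq_add2:
  assumes "0 < n"
  shows "recseq a b k (n + 2) = k * recseq a b k (n + 1) + recseq a b k n"
proof -
  obtain m where "n = Suc m"
    using assms gr0_conv_Suc by blast
  then show ?thesis by simp
qed

lemma recseq_pos: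
  assumes "0 < a" "0 < b" "0 < n"
  shows "0 < recseq a b k n"
  using assms by (induction a b k n rule: recseq.induct) simp_all

lemma gcd_recseq:
  assumes "0 < n"
  shows "gcd (recseq a b k n) (recseq a b k (n + 1)) = gcd a b"
  using assms
proof (induction n rule: nat_induct_non_zero)
  case (Suc n)
  have "gcd (recseq a b k (n + 1)) (recseq a b k (n + 2)) = gcd (recseq a b k (n + 1)) (recseq a b k n)"
    using recseq_add2[OF Suc.hyps] by (simp add: gcd_add_mult)
  with Suc.IH show ?case
    by (simp add: gcd.commute)
qed (simp add: numeral_2_eq_2)

lemma gcd_dvd_recseq:
  assumes "0 < n"
  shows "gcd a b dvd recseq a b k n"
  unfolding gcd_recseq[OF assms, of a b k, symmetric] by (rule gcd_dvd1)

lemma Gamma_recseq_step: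
  assumes "0 < a" "0 < b" "0 < n"
  shows "Gamma (recseq a b k (n + 1)) (recseq a b k (n + 2)) =
    (if odd (recseq a b k (n + 1) div gcd a b) \<or> even k
     then Gamma (recseq a b k n) (recseq a b k (n + 1))
     else 3 - Gamma (recseq a b k n) (recseq a b k (n + 1)))"
proof -
  let ?x = "recseq a b k n" and ?y = "recseq a b k (n + 1)"
  have "0 < ?x" "0 < ?y"
    using assms by (simp_all add: recseq_pos)
  moreover have "gcd ?y ?x = gcd a b"
    using gcd_recseq[OF assms(3)] by (simp add: gcd.commute)
  ultimately show ?thesis
    using Gamma_add_mult[of ?y ?x k] recseq_add2[OF assms(3)]
    by (simp add: add.commute Gamma_commute[of ?x])
qed

lemma Gamma_recseq_constant:
  assumes "0 < a" "0 < b" "even k"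
  shows "\<exists>c. \<forall>n\<ge>1. Gamma (recseq a b k n) (recseq a b k (n + 1)) = c"
proof -
  have "Gamma (recseq a b k n) (recseq a b k (n + 1)) = Gamma a b" if "0 < n" for n
    using that
  proof (induction n rule: nat_induct_non_zero)
    case (Suc n)
    then show ?case
      using Gamma_recseq_step[OF assms(1,2) Suc.hyps, of k] \<open>even k\<close> by simp
  qed (simp add: numeral_2_eq_2)
  then show ?thesis by auto
qed

lemma recseq_parity:
  assumes "odd k" "0 < m" "odd (recseq a b k (m + 1))" "odd (recseq a b k (m + 2))"
  shows "odd (recseq a b k (m + 1 + j)) \<longleftrightarrow> j mod 3 \<noteq> 2"
proof -
  define r where "r j = recseq a b k (m + 1 + j)" for j
  have r_step: "r (Suc (Suc j)) = k * r (Suc j) + r j" for j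
    using recseq_add2[of "m + 1 + j" a b k] unfolding r_def by (simp add: ac_simps)
  have "(odd (r j) \<longleftrightarrow> j mod 3 \<noteq> 2) \<and> (odd (r (Suc j)) \<longleftrightarrow> j mod 3 \<noteq> 1)"
  proof (induction j)
    case 0
    show ?case
      using assms(3,4) unfolding r_def by (simp add: ac_simps)
  next
    case (Suc j)
    consider "j mod 3 = 0" | "j mod 3 = 1" | "j mod 3 = 2"
      by arith
    then show ?case
      using Suc.IH r_step[of j] \<open>odd k\<close> by cases (simp_all add: mod_Suc)
  qed
  then show ?thesis
    unfolding r_def by blast
qed

lemma odd_div_iff:
  fixes x d :: nat
  assumes "odd d" "d dvd x"
  shows "odd (x div d) \<longleftrightarrow> odd x"
proof -
  obtain c where "x = d * c"
    using assms(2) by blast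
  moreover have "d \<noteq> 0"
    using odd_pos[OF assms(1)] by simp
  ultimately show ?thesis
    using assms(1) by simp
qed

lemma xseq_or_yseq:
  fixes h :: "nat \<Rightarrow> nat"
  assumes "h 0 = 1 \<or> h 0 = 2" "\<And>n. h (Suc n) = (if n mod 3 = 2 then 3 - h n else h n)"
  shows "(\<forall>j\<ge>1. h (j - 1) = xseq j) \<or> (\<forall>j\<ge>1. h (j - 1) = yseq j)"
proof -
  define c where "c = h 0"
  have h: "h n = (if n mod 6 < 3 then c else 3 - c)" for n
  proof (induction n)
    case (Suc n)
    have "n mod 3 = 2 \<longleftrightarrow> n mod 6 = 2 \<or> n mod 6 = 5"
      by presburger
    moreover have "Suc n mod 6 = (if n mod 6 = 5 then 0 else Suc (n mod 6))"
      by (simp add: mod_Suc)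
    ultimately show ?case
      using Suc.IH assms unfolding c_def by auto
  qed (simp add: c_def)
  show ?thesis
    using assms(1) unfolding c_def by (auto simp: h xseq_def yseq_def)
qed

lemma Gamma_recseq_blocks:
  assumes "0 < a" "0 < b" "odd k" "0 < m"
    and "odd (recseq a b k (m + 1))" "odd (recseq a b k (m + 2))"
  shows "(\<forall>j\<ge>1. Gamma (recseq a b k (m + j - 1)) (recseq a b k (m + j)) = xseq j)
       \<or> (\<forall>j\<ge>1. Gamma (recseq a b k (m + j - 1)) (recseq a b k (m + j)) = yseq j)"
proof -
  define h where "h j = Gamma (recseq a b k (m + j)) (recseq a b k (m + j + 1))" for j
  have "odd (gcd a b)"
  proof
    assume "even (gcd a b)"
    then have "even (recseq a b k (m + 1))"
      using gcd_dvd_recseq[of "m + 1" a b k] by (rule dvd_trans) simp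
    with assms(5) show False
      by simp
  qed
  have h0: "h 0 = 1 \<or> h 0 = 2"
    unfolding h_def by (rule Gamma_cases)
  have flip: "h (Suc j) = (if j mod 3 = 2 then 3 - h j else h j)" for j
  proof -
    let ?x = "recseq a b k (m + j + 1)"
    have "odd (?x div gcd a b) \<longleftrightarrow> odd ?x"
      using \<open>odd (gcd a b)\<close> gcd_dvd_recseq[of "m + j + 1" a b k] by (simp add: odd_div_iff)
    also have "\<dots> \<longleftrightarrow> j mod 3 \<noteq> 2"
      using recseq_parity[OF assms(3,4,5,6), of j] by (simp add: add.commute add.left_commute)
    finally show ?thesis
      using Gamma_recseq_step[OF assms(1,2), of "m + j" k] assms(3,4) unfolding h_def
      by (simp add: add.assoc)
  qed
  have "(\<forall>j\<ge>1. h (j - 1) = xseq j) \<or> (\<forall>j\<ge>1. h (j - 1) = yseq j)"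
    by (rule xseq_or_yseq[OF h0 flip])
  moreover have "h (j - 1) = Gamma (recseq a b k (m + j - 1)) (recseq a b k (m + j))" if "1 \<le> j" for j
    using that unfolding h_def by (simp add: add.commute add.left_commute)
  ultimately show ?thesis
    by auto
qed

theorem corollary5p3:
  fixes a b k :: nat
  assumes "a > 0" and "b > 0" and "k > 0"
  shows "(even k \<longrightarrow>
            (\<exists>c. \<forall>n\<ge>1. Gamma (recseq a b k n) (recseq a b k (n + 1)) = c))
       \<and> (odd k \<longrightarrow>
            (odd a \<and> odd b \<longrightarrow>
               (\<forall>j\<ge>1. Gamma (recseq a b k (3 + j - 1)) (recseq a b k (3 + j)) = xseq j)
             \<or> (\<forall>j\<ge>1. Gamma (recseq a b k (3 + j - 1)) (recseq a b k (3 + j)) = yseq j))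
          \<and> (odd a \<and> even b \<longrightarrow>
               (\<forall>j\<ge>1. Gamma (recseq a b k (2 + j - 1)) (recseq a b k (2 + j)) = xseq j)
             \<or> (\<forall>j\<ge>1. Gamma (recseq a b k (2 + j - 1)) (recseq a b k (2 + j)) = yseq j))
          \<and> (even a \<and> odd b \<longrightarrow>
               (\<forall>j\<ge>1. Gamma (recseq a b k (1 + j - 1)) (recseq a b k (1 + j)) = xseq j)
             \<or> (\<forall>j\<ge>1. Gamma (recseq a b k (1 + j - 1)) (recseq a b k (1 + j)) = yseq j)))"
proof -
  have initial_terms: "recseq a b k 2 = b" "recseq a b k 3 = k * b + a"
    "recseq a b k 4 = k * (k * b + a) + b"
    "recseq a b k 5 = k * (k * (k * b + a) + b) + (k * b + a)"
    by (simp_all add: eval_nat_numeral)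
  have "odd (recseq a b k (3 + 1)) \<and> odd (recseq a b k (3 + 2))" if "odd k" "odd a" "odd b"
    using that by (simp add: initial_terms)
  moreover have "odd (recseq a b k (2 + 1)) \<and> odd (recseq a b k (2 + 2))" if "odd k" "odd a" "even b"
    using that by (simp add: initial_terms)
  moreover have "odd (recseq a b k (1 + 1)) \<and> odd (recseq a b k (1 + 2))" if "odd k" "even a" "odd b"
    using that by (simp add: initial_terms)
  ultimately show ?thesis
    using Gamma_recseq_constant[OF assms(1,2)] Gamma_recseq_blocks[OF assms(1,2), of k 3]
      Gamma_recseq_blocks[OF assms(1,2), of k 2] Gamma_recseq_blocks[OF assms(1,2), of k 1]
    by simp
qed

end
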